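(* Let $d\ge 2$ and for $x,y,z\in\mathbb S^{d-1}$ let $A^2(x,y,z)$ be the square of the area of the triangle with vertices $x,y,z$. Then the uniform surface measure $\sigma$ maximizes $I_{A^2}(\mu)=\iiint A^2(x,y,z)\,d\mu(x)d\mu(y)d\mu(z)$ over $\mu\in\mathcal P(\mathbb S^{d-1})$. Moreover, any balanced isotropic measure $\mu\in\mathcal P(\mathbb S^{d-1})$ maximizes $I_{A^2}$.
   Context: $\mathbb S^{d-1}$ is the unit sphere in $\mathbb R^d$, $\mathcal P(\mathbb S^{d-1})$ the Borel probability measures on it, and $\sigma$ the normalized surface measure. $\mu$ is isotropic if $\int xx^T\,d\mu(x)=\frac1d I_d$, and balanced if $\int x\,d\mu(x)=0$. *)

theory Defs
  imports "HOL-Probability.Probability"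
begin

text \<open>Squared area of the triangle with vertices x, y, z in a Euclidean space:
  with u = y - x, v = z - x, the area is (1/2) sqrt(|u|^2 |v|^2 - (u.v)^2)
  (half the square root of the Gram determinant).\<close>
definition tri_area_sq :: "'a::euclidean_space \<Rightarrow> 'a \<Rightarrow> 'a \<Rightarrow> real" where
  "tri_area_sq x y z =
     ((norm (y - x))\<^sup>2 * (norm (z - x))\<^sup>2 - ((y - x) \<bullet> (z - x))\<^sup>2) / 4"

definition sphere_prob :: "'a::euclidean_space measure \<Rightarrow> bool" where
  "sphere_prob \<mu> \<longleftrightarrow> prob_space \<mu> \<and> sets \<mu> = sets borel \<and>
     emeasure \<mu> (sphere 0 1) = 1"

text \<open>Normalized surface measure on the sphere: push-forward of the uniform
  probability measure on the unit ball under radial projection x \<mapsto> x/|x|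
  (cone-measure construction).\<close>
definition sphere_sigma :: "'a::euclidean_space measure" where
  "sphere_sigma = distr (uniform_measure lborel (ball 0 1)) borel (\<lambda>x. x /\<^sub>R norm x)"

definition I_A2 :: "'a::euclidean_space measure \<Rightarrow> real" where
  "I_A2 \<mu> = (\<integral>x. (\<integral>y. (\<integral>z. tri_area_sq x y z \<partial>\<mu>) \<partial>\<mu>) \<partial>\<mu>)"

definition balanced :: "'a::euclidean_space measure \<Rightarrow> bool" where
  "balanced \<mu> \<longleftrightarrow> (\<integral>x. x \<partial>\<mu>) = 0"

definition isotropic :: "'a::euclidean_space measure \<Rightarrow> bool" where
  "isotropic \<mu> \<longleftrightarrow> (\<forall>i\<in>Basis. \<forall>j\<in>Basis.
     (\<integral>x. (x \<bullet> i) * (x \<bullet> j) \<partial>\<mu>) = (if i = j then 1 / real DIM('a) else 0))"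

end

theory Submission
  imports Defs
begin

(* For unit vectors, 4 A^2(x,y,z) is a quadratic polynomial in the three inner products
   x.y, x.z, y.z. Integrating one vertex at a time gives
     4 I_A2(mu) = 3 - 6 |m|^2 - 3 tr(S^2) + 6 m.Sm,
   where m is the mean and S the second-moment matrix of mu. Since tr S = 1, Cauchy-Schwarz gives
   tr(S^2) >= 1/d, and since mu lives on the sphere, m.Sm <= |m|^2. Hence
   I_A2(mu) <= 3/4 (1 - 1/d), with equality when m = 0 and S = I/d. The surface measure is
   balanced and isotropic because it is invariant under coordinate reflections and coordinate
   transpositions, both of which preserve Lebesgue measure. *)

lemma tri_area_sq_unit_vectors:
  assumes "norm x = 1" "norm y = 1" "norm z = 1"
  shows "tri_area_sq x y z =
    (3 - 2 * (x \<bullet> y + x \<bullet> z + y \<bullet> z) - ((x \<bullet> y)\<^sup>2 + (x \<bullet> z)\<^sup>2 + (y \<bullet> z)\<^sup>2)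
       + 2 * ((x \<bullet> y) * (x \<bullet> z) + (x \<bullet> y) * (y \<bullet> z) + (x \<bullet> z) * (y \<bullet> z))) / 4"
proof -
  have "x \<bullet> x = 1" "y \<bullet> y = 1" "z \<bullet> z = 1"
    using assms by (simp_all add: norm_eq_1)
  then show ?thesis
    unfolding tri_area_sq_def power2_norm_eq_inner
    by (simp add: inner_diff_left inner_diff_right inner_commute[of y x] inner_commute[of z x]
        inner_commute[of z y] power2_eq_square algebra_simps)
qed

section \<open>Moments of probability measures on the sphere\<close>

definition mean_vec :: "'a::euclidean_space measure \<Rightarrow> 'a" where
  "mean_vec M = (\<integral>z. z \<partial>M)"

(* moment_op M is the second-moment matrix S = (integral of z z^T) acting on vectors, and
   moment_frob M = tr(S^2), the squared Frobenius norm of S. *)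
definition moment_op :: "'a::euclidean_space measure \<Rightarrow> 'a \<Rightarrow> 'a" where
  "moment_op M u = (\<integral>z. (u \<bullet> z) *\<^sub>R z \<partial>M)"

definition moment_frob :: "'a::euclidean_space measure \<Rightarrow> real" where
  "moment_frob M = (\<Sum>j\<in>Basis. moment_op M j \<bullet> moment_op M j)"

locale sphere_prob_space = prob_space M for M :: "'a::euclidean_space measure" +
  assumes sets_eq_borel [measurable_cong]: "sets M = sets borel"
    and emeasure_sphere: "emeasure M (sphere 0 1) = 1"
begin

lemma AE_norm_eq_1: "AE z in M. norm z = 1"
proof -
  have "prob (sphere 0 1) = 1"
    using emeasure_sphere by (simp add: emeasure_eq_measure)
  then have "AE z in M. z \<in> sphere 0 1"
    by (rule AE_prob_1)
  then show ?thesis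
    by simp
qed

lemma integrable_bounded_on_sphere:
  fixes f :: "'a \<Rightarrow> 'b::{banach,second_countable_topology}"
  assumes "f \<in> borel_measurable borel" and "\<And>z. norm z = 1 \<Longrightarrow> norm (f z) \<le> B"
  shows "integrable M f"
proof (rule integrable_const_bound)
  show "AE z in M. norm (f z) \<le> B"
    using AE_norm_eq_1 by eventually_elim (rule assms(2))
  show "f \<in> borel_measurable M"
    using assms(1) by (simp add: measurable_cong_sets[OF sets_eq_borel refl])
qed

lemma integral_cong_sphere:
  assumes "f \<in> borel_measurable M" "g \<in> borel_measurable M" "\<And>z. norm z = 1 \<Longrightarrow> f z = g z"
  shows "integral\<^sup>L M f = integral\<^sup>L M g"
  using AE_norm_eq_1 assms by (intro integral_cong_AE) auto

lemma integrable_id [simp]: "integrable M (\<lambda>z. z)"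
  by (rule integrable_bounded_on_sphere[where B = 1]) simp_all

lemma integrable_scaleR_inner [simp]: "integrable M (\<lambda>z. (u \<bullet> z) *\<^sub>R z)"
proof (rule integrable_bounded_on_sphere[where B = "norm u"])
  show "norm ((u \<bullet> z) *\<^sub>R z) \<le> norm u" if "norm z = 1" for z
    using that Cauchy_Schwarz_ineq2[of u z] by simp
qed measurable

lemma integrable_inner_mult_inner [simp]: "integrable M (\<lambda>z. (u \<bullet> z) * (v \<bullet> z))"
  using integrable_inner_right[OF integrable_scaleR_inner, of v u]
  by (simp add: mult.commute)

lemma integral_inner_mult_inner: "(\<integral>z. (u \<bullet> z) * (v \<bullet> z) \<partial>M) = v \<bullet> moment_op M u"
  using integral_inner_right[of v M "\<lambda>z. (u \<bullet> z) *\<^sub>R z"]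
  by (simp add: moment_op_def)

lemma moment_op_symmetric: "v \<bullet> moment_op M u = u \<bullet> moment_op M v"
  using integral_inner_mult_inner[of u v] integral_inner_mult_inner[of v u]
  by (simp add: mult.commute)

lemma linear_moment_op: "linear (moment_op M)"
proof (rule linearI)
  show "moment_op M (u + v) = moment_op M u + moment_op M v" for u v
    by (simp add: moment_op_def inner_add_left scaleR_add_left)
  show "moment_op M (c *\<^sub>R u) = c *\<^sub>R moment_op M u" for c u
    by (simp only: moment_op_def inner_scaleR_left scaleR_scaleR[symmetric] integral_scaleR_right)
qed

lemma borel_measurable_moment_op [measurable]: "moment_op M \<in> borel_measurable borel"
  using linear_moment_op
  by (intro borel_measurable_continuous_onI linear_continuous_on)
     (simp add: linear_conv_bounded_linear)

lemma integral_inner_mean: "(\<integral>z. u \<bullet> z \<partial>M) = u \<bullet> mean_vec M"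
  by (simp add: mean_vec_def)

lemma integrable_quadratic_form [simp]: "integrable M (\<lambda>z. z \<bullet> moment_op M z)"
proof -
  obtain K where K: "\<And>x. norm (moment_op M x) \<le> norm x * K"
    using linear_moment_op linear_conv_bounded_linear bounded_linear.bounded by blast
  show ?thesis
  proof (rule integrable_bounded_on_sphere[where B = K])
    show "norm (z \<bullet> moment_op M z) \<le> K" if "norm z = 1" for z
      using that Cauchy_Schwarz_ineq2[of z "moment_op M z"] K[of z] by simp
  qed measurable
qed

lemma integral_quadratic_form: "(\<integral>z. z \<bullet> moment_op M z \<partial>M) = moment_frob M"
proof -
  have "z \<bullet> moment_op M z = (\<Sum>j\<in>Basis. (j \<bullet> z) * (moment_op M j \<bullet> z))" for z
    by (subst euclidean_inner)
       (simp add: moment_op_symmetric[of _ z] inner_commute mult.commute)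
  then show ?thesis
    by (simp add: integral_inner_mult_inner moment_frob_def)
qed

lemma trace_moment_op: "(\<Sum>j\<in>Basis. j \<bullet> moment_op M j) = 1"
proof -
  have "(\<Sum>j\<in>Basis. j \<bullet> moment_op M j) = (\<integral>z. (\<Sum>j\<in>Basis. (j \<bullet> z) * (j \<bullet> z)) \<partial>M)"
    by (simp add: integral_inner_mult_inner)
  also have "\<dots> = (\<integral>z. 1 \<partial>M)"
    by (rule integral_cong_sphere)
       (simp_all add: euclidean_inner[symmetric] inner_commute norm_eq_1)
  finally show ?thesis
    by (simp add: prob_space)
qed

lemma moment_frob_ge_inverse_dim: "1 / DIM('a) \<le> moment_frob M"
proof -
  have "1 = (\<Sum>j\<in>(Basis::'a set). j \<bullet> moment_op M j)\<^sup>2"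
    by (simp add: trace_moment_op)
  also have "\<dots> \<le> DIM('a) * (\<Sum>j\<in>Basis. (j \<bullet> moment_op M j)\<^sup>2)"
    using sum_squared_le_sum_of_squares[of _ Basis] by (simp add: mult.commute)
  also have "\<dots> \<le> DIM('a) * moment_frob M"
    unfolding moment_frob_def
    by (intro mult_left_mono sum_mono) (simp_all, metis Cauchy_Schwarz_ineq inner_Basis mult_1)
  finally show ?thesis
    by (simp add: field_simps)
qed

lemma inner_moment_op_self_le: "u \<bullet> moment_op M u \<le> u \<bullet> u"
proof -
  have "u \<bullet> moment_op M u = (\<integral>z. (u \<bullet> z)\<^sup>2 \<partial>M)"
    by (simp add: integral_inner_mult_inner power2_eq_square)
  also have "\<dots> \<le> (\<integral>z. u \<bullet> u \<partial>M)"
  proof (rule integral_mono_AE)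
    show "AE z in M. (u \<bullet> z)\<^sup>2 \<le> u \<bullet> u"
      using AE_norm_eq_1 by eventually_elim (metis Cauchy_Schwarz_ineq inner_commute mult_1 norm_eq_1)
  qed (simp_all add: power2_eq_square)
  finally show ?thesis
    by (simp add: prob_space)
qed

(* The integrands are spelled out as sums of constants times 1, u.z and (u.z)(v.z), so that the
   simplifier can integrate them termwise. *)
lemma integral_tri_area_sq_last:
  assumes "norm x = 1" "norm y = 1"
  shows "(\<integral>z. tri_area_sq x y z \<partial>M) =
    (3 - 2 * (x \<bullet> y) - (x \<bullet> y) * (x \<bullet> y) + 2 * (mean_vec M \<bullet> x) * (x \<bullet> y)
      + 2 * ((x \<bullet> y) * (mean_vec M \<bullet> y)) - 2 * (mean_vec M \<bullet> x) - 2 * (mean_vec M \<bullet> y)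
      - x \<bullet> moment_op M x - y \<bullet> moment_op M y + 2 * (moment_op M x \<bullet> y)) / 4"
proof -
  have "(\<integral>z. tri_area_sq x y z \<partial>M) = (\<integral>z. (3 - 2 * (x \<bullet> y) - (x \<bullet> y) * (x \<bullet> y)
      + (2 * (x \<bullet> y) - 2) * (x \<bullet> z) + (2 * (x \<bullet> y) - 2) * (y \<bullet> z)
      - (x \<bullet> z) * (x \<bullet> z) - (y \<bullet> z) * (y \<bullet> z) + 2 * ((x \<bullet> z) * (y \<bullet> z))) / 4 \<partial>M)"
  proof (rule integral_cong_sphere)
    show "tri_area_sq x y z = (3 - 2 * (x \<bullet> y) - (x \<bullet> y) * (x \<bullet> y)
      + (2 * (x \<bullet> y) - 2) * (x \<bullet> z) + (2 * (x \<bullet> y) - 2) * (y \<bullet> z)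
      - (x \<bullet> z) * (x \<bullet> z) - (y \<bullet> z) * (y \<bullet> z) + 2 * ((x \<bullet> z) * (y \<bullet> z))) / 4"
      if "norm z = 1" for z
      using that by (simp add: tri_area_sq_unit_vectors assms power2_eq_square field_simps)
  qed (unfold tri_area_sq_def, measurable)
  also have "\<dots> = (3 - 2 * (x \<bullet> y) - (x \<bullet> y) * (x \<bullet> y) + 2 * (mean_vec M \<bullet> x) * (x \<bullet> y)
      + 2 * ((x \<bullet> y) * (mean_vec M \<bullet> y)) - 2 * (mean_vec M \<bullet> x) - 2 * (mean_vec M \<bullet> y)
      - x \<bullet> moment_op M x - y \<bullet> moment_op M y + 2 * (moment_op M x \<bullet> y)) / 4"
    by (simp add: integral_inner_mult_inner integral_inner_mean prob_space)
       (simp add: inner_commute algebra_simps)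
  finally show ?thesis .
qed

lemma integral_tri_area_sq_last_two:
  assumes "norm x = 1"
  shows "(\<integral>y. \<integral>z. tri_area_sq x y z \<partial>M \<partial>M) =
    (3 - 4 * (mean_vec M \<bullet> x) - 2 * (x \<bullet> moment_op M x) + 2 * ((mean_vec M \<bullet> x) * (mean_vec M \<bullet> x))
      + 4 * (moment_op M (mean_vec M) \<bullet> x) - 2 * (mean_vec M \<bullet> mean_vec M) - moment_frob M) / 4"
proof -
  have "(\<integral>y. \<integral>z. tri_area_sq x y z \<partial>M \<partial>M) =
    (\<integral>y. (3 - 2 * (x \<bullet> y) - (x \<bullet> y) * (x \<bullet> y) + 2 * (mean_vec M \<bullet> x) * (x \<bullet> y)
      + 2 * ((x \<bullet> y) * (mean_vec M \<bullet> y)) - 2 * (mean_vec M \<bullet> x) - 2 * (mean_vec M \<bullet> y)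
      - x \<bullet> moment_op M x - y \<bullet> moment_op M y + 2 * (moment_op M x \<bullet> y)) / 4 \<partial>M)"
    using assms by (intro integral_cong_sphere integral_tri_area_sq_last) (unfold tri_area_sq_def, measurable)
  also have "\<dots> = (3 - 4 * (mean_vec M \<bullet> x) - 2 * (x \<bullet> moment_op M x) + 2 * ((mean_vec M \<bullet> x) * (mean_vec M \<bullet> x))
      + 4 * (moment_op M (mean_vec M) \<bullet> x) - 2 * (mean_vec M \<bullet> mean_vec M) - moment_frob M) / 4"
    by (simp add: integral_inner_mult_inner integral_inner_mean integral_quadratic_form prob_space)
       (simp add: inner_commute moment_op_symmetric algebra_simps)
  finally show ?thesis .
qed

lemma I_A2_eq_moments:
  "I_A2 M = (3 - 6 * (mean_vec M \<bullet> mean_vec M) - 3 * moment_frob M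
    + 6 * (mean_vec M \<bullet> moment_op M (mean_vec M))) / 4"
proof -
  have "I_A2 M = (\<integral>x. (3 - 4 * (mean_vec M \<bullet> x) - 2 * (x \<bullet> moment_op M x)
      + 2 * ((mean_vec M \<bullet> x) * (mean_vec M \<bullet> x)) + 4 * (moment_op M (mean_vec M) \<bullet> x)
      - 2 * (mean_vec M \<bullet> mean_vec M) - moment_frob M) / 4 \<partial>M)"
    unfolding I_A2_def
    by (intro integral_cong_sphere integral_tri_area_sq_last_two) (unfold tri_area_sq_def, measurable)
  also have "\<dots> = (3 - 6 * (mean_vec M \<bullet> mean_vec M) - 3 * moment_frob M
    + 6 * (mean_vec M \<bullet> moment_op M (mean_vec M))) / 4"
    by (simp add: integral_inner_mult_inner integral_inner_mean integral_quadratic_form prob_space)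
       (simp add: inner_commute algebra_simps)
  finally show ?thesis .
qed

lemma I_A2_le: "I_A2 M \<le> 3 / 4 * (1 - 1 / DIM('a))"
  using I_A2_eq_moments moment_frob_ge_inverse_dim inner_moment_op_self_le[of "mean_vec M"]
  by (simp add: algebra_simps)

lemma moment_op_Basis_isotropic:
  assumes "isotropic M" and "i \<in> Basis"
  shows "moment_op M i = (1 / DIM('a)) *\<^sub>R i"
proof (rule euclidean_eqI)
  fix b :: 'a assume "b \<in> Basis"
  have "moment_op M i \<bullet> b = (\<integral>z. (z \<bullet> i) * (z \<bullet> b) \<partial>M)"
    using integral_inner_mult_inner[of i b] by (simp add: inner_commute)
  also have "\<dots> = (1 / DIM('a)) *\<^sub>R i \<bullet> b"
    using assms \<open>b \<in> Basis\<close> by (simp add: isotropic_def inner_Basis)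
  finally show "moment_op M i \<bullet> b = (1 / DIM('a)) *\<^sub>R i \<bullet> b" .
qed

lemma I_A2_balanced_isotropic:
  assumes "balanced M" and "isotropic M"
  shows "I_A2 M = 3 / 4 * (1 - 1 / DIM('a))"
proof -
  have "mean_vec M = 0"
    using \<open>balanced M\<close> by (simp add: balanced_def mean_vec_def)
  moreover have "moment_frob M = 1 / DIM('a)"
    using \<open>isotropic M\<close> by (simp add: moment_frob_def moment_op_Basis_isotropic power2_eq_square)
  ultimately show ?thesis
    by (simp add: I_A2_eq_moments)
qed

end

lemma sphere_prob_space_iff: "sphere_prob_space M \<longleftrightarrow> sphere_prob M"
  by (auto simp: sphere_prob_def sphere_prob_space_def sphere_prob_space_axioms_def)

section \<open>The normalized surface measure\<close>

lemma prob_space_uniform_ball: "prob_space (uniform_measure lborel (ball (0::'a::euclidean_space) 1))"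
proof (rule prob_space_uniform_measure)
  show "emeasure lborel (ball (0::'a) 1) \<noteq> 0"
    using content_ball_pos[of 1 "0::'a"] by (auto simp: measure_def)
  show "emeasure lborel (ball (0::'a) 1) \<noteq> \<infinity>"
    using emeasure_lborel_ball_finite[of "0::'a" 1] by simp
qed

lemma sphere_prob_sphere_sigma: "sphere_prob (sphere_sigma :: 'a::euclidean_space measure)"
proof -
  interpret U: prob_space "uniform_measure lborel (ball (0::'a) 1)"
    by (rule prob_space_uniform_ball)
  interpret S: prob_space "sphere_sigma :: 'a measure"
    unfolding sphere_sigma_def by (rule U.prob_space_distr) simp
  have "AE x in lborel. x \<noteq> (0::'a)"
    by (rule AE_lborel_singleton)
  then have "AE x in uniform_measure lborel (ball (0::'a) 1). x \<noteq> 0"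
    by (intro AE_uniform_measureI) (auto elim: eventually_mono)
  then have "AE x in sphere_sigma :: 'a measure. x \<in> sphere 0 1"
    unfolding sphere_sigma_def by (subst AE_distr_iff) auto
  then have "emeasure sphere_sigma (sphere (0::'a) 1) = 1"
    by (intro S.emeasure_eq_1_AE) (simp_all add: sphere_sigma_def)
  then show ?thesis
    unfolding sphere_prob_def using S.prob_space_axioms by (simp add: sphere_sigma_def)
qed

lemma distr_uniform_measure_lborel_invariant:
  assumes T [measurable]: "T \<in> borel_measurable borel"
    and "distr lborel borel T = lborel" and S [measurable]: "S \<in> sets borel" and "T -` S = S"
  shows "distr (uniform_measure lborel S) borel T = uniform_measure lborel S"
proof (rule measure_eqI)
  fix A assume "A \<in> sets (distr (uniform_measure lborel S) borel T)"
  then have A [measurable]: "A \<in> sets borel"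
    by simp
  have "S \<inter> T -` A = T -` (S \<inter> A)"
    using \<open>T -` S = S\<close> by auto
  moreover have "emeasure lborel (T -` (S \<inter> A)) = emeasure (distr lborel borel T) (S \<inter> A)"
    by (subst emeasure_distr) auto
  then have "emeasure lborel (T -` (S \<inter> A)) = emeasure lborel (S \<inter> A)"
    using \<open>distr lborel borel T = lborel\<close> by simp
  ultimately show "emeasure (distr (uniform_measure lborel S) borel T) A = emeasure (uniform_measure lborel S) A"
    using measurable_sets_borel[OF T A] by (simp add: emeasure_distr)
qed simp

lemma borel_measurable_linear:
  fixes T :: "'a::euclidean_space \<Rightarrow> 'b::euclidean_space"
  assumes "linear T"
  shows "T \<in> borel_measurable borel"
  using assms
  by (intro borel_measurable_continuous_onI linear_continuous_on) (simp add: linear_conv_bounded_linear)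

lemma distr_sphere_sigma_invariant:
  fixes T :: "'a::euclidean_space \<Rightarrow> 'a"
  assumes "linear T" and norm_T: "\<And>x. norm (T x) = norm x" and "distr lborel borel T = lborel"
  shows "distr sphere_sigma borel T = (sphere_sigma :: 'a measure)"
proof -
  let ?U = "uniform_measure lborel (ball (0::'a) 1)"
  let ?N = "\<lambda>x::'a. x /\<^sub>R norm x"
  have [measurable]: "T \<in> borel_measurable borel"
    using \<open>linear T\<close> by (rule borel_measurable_linear)
  have "T \<circ> ?N = ?N \<circ> T"
    by (auto simp: norm_T linear_cmul[OF \<open>linear T\<close>])
  then have "distr sphere_sigma borel T = distr (distr ?U borel T) borel ?N"
    unfolding sphere_sigma_def by (simp add: distr_distr)
  also have "distr ?U borel T = ?U"
    using assms by (intro distr_uniform_measure_lborel_invariant) auto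
  finally show ?thesis
    unfolding sphere_sigma_def .
qed

lemma integral_sphere_sigma_invariant:
  fixes T :: "'a::euclidean_space \<Rightarrow> 'a" and f :: "'a \<Rightarrow> 'b::{banach,second_countable_topology}"
  assumes "linear T" "\<And>x. norm (T x) = norm x" "distr lborel borel T = lborel"
    and f [measurable]: "f \<in> borel_measurable borel"
  shows "(\<integral>x. f (T x) \<partial>sphere_sigma) = (\<integral>x. f x \<partial>sphere_sigma)"
proof -
  have "T \<in> borel_measurable sphere_sigma"
    using borel_measurable_linear[OF \<open>linear T\<close>] by (simp add: sphere_sigma_def)
  then have "(\<integral>x. f (T x) \<partial>sphere_sigma) = (\<integral>x. f x \<partial>distr sphere_sigma borel T)"
    by (simp add: integral_distr)
  also have "\<dots> = (\<integral>x. f x \<partial>sphere_sigma)"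
    using assms(1-3) by (simp add: distr_sphere_sigma_invariant)
  finally show ?thesis .
qed

(* Written as a diagonal map, the form expected by lborel_affine_euclidean. *)
definition coord_flip :: "'a \<Rightarrow> 'a \<Rightarrow> 'a::euclidean_space" where
  "coord_flip i x = (\<Sum>b\<in>Basis. ((if b = i then -1 else 1) * (x \<bullet> b)) *\<^sub>R b)"

definition coord_swap :: "'a \<Rightarrow> 'a \<Rightarrow> 'a \<Rightarrow> 'a::euclidean_space" where
  "coord_swap i j x = (\<Sum>b\<in>Basis. (x \<bullet> Transposition.transpose i j b) *\<^sub>R b)"

lemma inner_coord_flip: "b \<in> Basis \<Longrightarrow> coord_flip i x \<bullet> b = (if b = i then - (x \<bullet> b) else x \<bullet> b)"
  by (simp add: coord_flip_def)

lemma inner_coord_swap: "b \<in> Basis \<Longrightarrow> coord_swap i j x \<bullet> b = x \<bullet> Transposition.transpose i j b"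
  by (simp add: coord_swap_def)

lemma linear_coord_flip: "linear (coord_flip i)"
  by (rule linearI)
     (simp_all add: coord_flip_def inner_add_left distrib_left scaleR_add_left sum.distrib
       scaleR_sum_right mult.left_commute)

lemma linear_coord_swap: "linear (coord_swap i j)"
  by (rule linearI) (simp_all add: coord_swap_def inner_add_left scaleR_add_left sum.distrib scaleR_sum_right)

lemma norm_coord_flip: "norm (coord_flip i x) = norm x"
proof -
  have "coord_flip i x \<bullet> coord_flip i x = x \<bullet> x"
    unfolding euclidean_inner[of "coord_flip i x" "coord_flip i x"] euclidean_inner[of x x]
    by (intro sum.cong) (simp_all add: inner_coord_flip)
  then show ?thesis
    by (simp add: norm_eq_sqrt_inner)
qed

lemma transpose_in_Basis:
  "i \<in> Basis \<Longrightarrow> j \<in> Basis \<Longrightarrow> b \<in> Basis \<Longrightarrow> Transposition.transpose i j b \<in> Basis"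
  by (auto simp: Transposition.transpose_def)

lemma norm_coord_swap:
  assumes "i \<in> Basis" "j \<in> Basis"
  shows "norm (coord_swap i j x) = norm x"
proof -
  have "coord_swap i j x \<bullet> coord_swap i j x
      = (\<Sum>b\<in>Basis. (x \<bullet> Transposition.transpose i j b) * (x \<bullet> Transposition.transpose i j b))"
    by (simp add: euclidean_inner[of "coord_swap i j x" "coord_swap i j x"] inner_coord_swap)
  also have "\<dots> = (\<Sum>b\<in>Basis. (x \<bullet> b) * (x \<bullet> b))"
    using assms sum.reindex_bij_betw[of "Transposition.transpose i j" Basis Basis "\<lambda>b. (x \<bullet> b) * (x \<bullet> b)"]
    by simp
  finally show ?thesis
    by (simp add: norm_eq_sqrt_inner euclidean_inner[symmetric])
qed

lemma lborel_distr_coord_flip: "distr lborel borel (coord_flip i) = (lborel :: 'a::euclidean_space measure)"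
proof -
  let ?c = "\<lambda>b::'a. if b = i then -1 else 1 :: real"
  have "(lborel :: 'a measure) =
      density (distr lborel borel (\<lambda>x. 0 + (\<Sum>b\<in>Basis. (?c b * (x \<bullet> b)) *\<^sub>R b))) (\<lambda>_. \<Prod>b\<in>Basis. \<bar>?c b\<bar>)"
    by (rule lborel_affine_euclidean) simp
  then show ?thesis
    by (simp add: coord_flip_def[abs_def] density_1 if_distrib[of abs] cong: if_cong)
qed

lemma lborel_distr_coord_swap:
  assumes ij: "i \<in> Basis" "j \<in> Basis"
  shows "distr lborel borel (coord_swap i j) = (lborel :: 'a::euclidean_space measure)"
proof (rule lborel_eqI[symmetric])
  let ?\<tau> = "Transposition.transpose i j"
  have [measurable]: "coord_swap i j \<in> borel_measurable (borel :: 'a measure)"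
    by (rule borel_measurable_linear[OF linear_coord_swap])
  have ball_swap: "(\<forall>b\<in>Basis. P (?\<tau> b)) \<longleftrightarrow> (\<forall>b\<in>Basis. P b)" for P
    using transpose_in_Basis[OF ij] by (metis transpose_involutory)
  fix l u :: 'a
  assume le: "\<And>b. b \<in> Basis \<Longrightarrow> l \<bullet> b \<le> u \<bullet> b"
  have "coord_swap i j x \<in> box l u \<longleftrightarrow> x \<in> box (coord_swap i j l) (coord_swap i j u)" for x
    unfolding mem_box inner_coord_swap
    using ball_swap[of "\<lambda>b. l \<bullet> b < x \<bullet> ?\<tau> b \<and> x \<bullet> ?\<tau> b < u \<bullet> b"]
    by (simp add: inner_coord_swap)
  then have "coord_swap i j -` box l u = box (coord_swap i j l) (coord_swap i j u)"
    by auto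
  then have "emeasure (distr lborel borel (coord_swap i j)) (box l u)
      = emeasure lborel (box (coord_swap i j l) (coord_swap i j u))"
    by (subst emeasure_distr) auto
  also have "\<dots> = (\<Prod>b\<in>Basis. (u - l) \<bullet> ?\<tau> b)"
    using le transpose_in_Basis[OF ij] by (simp add: inner_coord_swap inner_diff_left)
  also have "\<dots> = (\<Prod>b\<in>Basis. (u - l) \<bullet> b)"
    using ij prod.reindex_bij_betw[of ?\<tau> Basis Basis "\<lambda>b. (u - l) \<bullet> b"] by simp
  finally show "emeasure (distr lborel borel (coord_swap i j)) (box l u) = (\<Prod>b\<in>Basis. (u - l) \<bullet> b)" .
qed simp

interpretation sphere_sigma: sphere_prob_space "sphere_sigma :: 'a::euclidean_space measure"
  using sphere_prob_sphere_sigma by (simp add: sphere_prob_space_iff)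

lemma sphere_sigma_balanced: "balanced (sphere_sigma :: 'a::euclidean_space measure)"
  unfolding balanced_def
proof (rule euclidean_eqI)
  fix i :: 'a assume i: "i \<in> Basis"
  have "(\<integral>x. x \<bullet> i \<partial>sphere_sigma) = (\<integral>x. coord_flip i x \<bullet> i \<partial>(sphere_sigma :: 'a measure))"
    by (rule integral_sphere_sigma_invariant[OF linear_coord_flip norm_coord_flip lborel_distr_coord_flip,
          where f = "\<lambda>x. x \<bullet> i", symmetric]) simp
  also have "\<dots> = - (\<integral>x. x \<bullet> i \<partial>sphere_sigma)"
    using i by (simp add: inner_coord_flip)
  finally show "(\<integral>x. x \<partial>sphere_sigma) \<bullet> i = 0 \<bullet> i"
    by simp
qed

lemma sphere_sigma_isotropic: "isotropic (sphere_sigma :: 'a::euclidean_space measure)"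
  unfolding isotropic_def
proof (intro ballI)
  fix i j :: 'a assume i: "i \<in> Basis" and j: "j \<in> Basis"
  show "(\<integral>x. (x \<bullet> i) * (x \<bullet> j) \<partial>sphere_sigma) = (if i = j then 1 / real DIM('a) else 0)"
  proof (cases "i = j")
    case False
    have "(\<integral>x. (x \<bullet> i) * (x \<bullet> j) \<partial>sphere_sigma)
        = (\<integral>x. (coord_flip i x \<bullet> i) * (coord_flip i x \<bullet> j) \<partial>(sphere_sigma :: 'a measure))"
      by (rule integral_sphere_sigma_invariant[OF linear_coord_flip norm_coord_flip lborel_distr_coord_flip,
            where f = "\<lambda>x. (x \<bullet> i) * (x \<bullet> j)", symmetric]) simp
    also have "\<dots> = - (\<integral>x. (x \<bullet> i) * (x \<bullet> j) \<partial>sphere_sigma)"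
      using i j False by (simp add: inner_coord_flip)
    finally show ?thesis
      using False by simp
  next
    case True
    have diagonal: "k \<bullet> moment_op sphere_sigma k = i \<bullet> moment_op sphere_sigma i" if k: "k \<in> Basis" for k :: 'a
    proof -
      have "k \<bullet> moment_op sphere_sigma k = (\<integral>x. (k \<bullet> x) * (k \<bullet> x) \<partial>sphere_sigma)"
        by (simp add: sphere_sigma.integral_inner_mult_inner)
      also have "\<dots> = (\<integral>x. (k \<bullet> coord_swap i k x) * (k \<bullet> coord_swap i k x) \<partial>sphere_sigma)"
        by (rule integral_sphere_sigma_invariant[OF linear_coord_swap norm_coord_swap[OF i k]
              lborel_distr_coord_swap[OF i k], where f = "\<lambda>x. (k \<bullet> x) * (k \<bullet> x)", symmetric]) simp
      also have "\<dots> = (\<integral>x. (i \<bullet> x) * (i \<bullet> x) \<partial>sphere_sigma)"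
        using k by (simp add: inner_commute[of k] inner_coord_swap inner_commute[of _ i])
      also have "\<dots> = i \<bullet> moment_op sphere_sigma i"
        by (simp add: sphere_sigma.integral_inner_mult_inner)
      finally show ?thesis .
    qed
    have "1 = (\<Sum>k\<in>(Basis::'a set). k \<bullet> moment_op sphere_sigma k)"
      by (simp add: sphere_sigma.trace_moment_op)
    also have "\<dots> = DIM('a) * (i \<bullet> moment_op sphere_sigma i)"
      by (simp add: diagonal)
    finally have "i \<bullet> moment_op sphere_sigma i = 1 / DIM('a)"
      by (simp add: field_simps)
    moreover have "(\<integral>x. (x \<bullet> i) * (x \<bullet> i) \<partial>sphere_sigma) = i \<bullet> moment_op sphere_sigma i"
      using sphere_sigma.integral_inner_mult_inner[of i i] by (simp add: inner_commute)
    ultimately show ?thesis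
      using True by simp
  qed
qed

(* The argument works in every dimension. *)
theorem theorem4p4:
  assumes "DIM('a::euclidean_space) \<ge> 2"
  shows "sphere_prob (sphere_sigma :: 'a measure) \<and>
         (\<forall>\<mu>::'a measure. sphere_prob \<mu> \<longrightarrow> I_A2 \<mu> \<le> I_A2 (sphere_sigma :: 'a measure)) \<and>
         (\<forall>\<mu>::'a measure. sphere_prob \<mu> \<and> balanced \<mu> \<and> isotropic \<mu> \<longrightarrow>
            (\<forall>\<nu>::'a measure. sphere_prob \<nu> \<longrightarrow> I_A2 \<nu> \<le> I_A2 \<mu>))"
proof -
  have upper: "I_A2 \<nu> \<le> 3 / 4 * (1 - 1 / DIM('a))" if "sphere_prob \<nu>" for \<nu> :: "'a measure"
    using that sphere_prob_space.I_A2_le by (simp add: sphere_prob_space_iff)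
  have attained: "I_A2 \<mu> = 3 / 4 * (1 - 1 / DIM('a))"
    if "sphere_prob \<mu>" "balanced \<mu>" "isotropic \<mu>" for \<mu> :: "'a measure"
    using that sphere_prob_space.I_A2_balanced_isotropic by (simp add: sphere_prob_space_iff)
  have sigma: "I_A2 (sphere_sigma :: 'a measure) = 3 / 4 * (1 - 1 / DIM('a))"
    by (rule attained[OF sphere_prob_sphere_sigma sphere_sigma_balanced sphere_sigma_isotropic])
  show ?thesis
    unfolding sigma using sphere_prob_sphere_sigma upper attained by metis
qed

end
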